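(* Let $(p_n)_{n \ge 1}$ be a strictly increasing sequence of prime numbers and fix $\ell \in \mathbb{N}$. Then $M = \left\langle \frac{1}{p_i p_{i+\ell}} \;\middle|\; i \in \mathbb{N} \right\rangle$ is an atomic weak reciprocal Puiseux monoid that does not satisfy the ascending chain condition on principal ideals (ACCP).
   Context: A Puiseux monoid is an additive submonoid of $(\mathbb{Q}_{\ge 0},+)$. A weak reciprocal Puiseux monoid is one of the form $\langle \frac{1}{d_n} \mid n \in \mathbb{N}\rangle$ for a strictly increasing sequence $(d_n)_{n\ge1}$ of positive integers. An atom of $M$ is a nonzero element $a$ such that $a=x+y$ with $x,y\in M$ forces $x=0$ or $y=0$; $M$ is atomic if each element is a finite sum of atoms. A principal ideal of $M$ is a set $r + M = \{r+q \mid q\in M\}$ with $r \in M$; $M$ satisfies the ACCP if every ascending chain of principal ideals is eventually constant. *)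

theory Defs
  imports Complex_Main "HOL-Computational_Algebra.Primes"
begin

inductive_set monoid_gen :: "rat set \<Rightarrow> rat set" for S :: "rat set" where
  zero: "0 \<in> monoid_gen S"
| add: "s \<in> S \<Longrightarrow> x \<in> monoid_gen S \<Longrightarrow> s + x \<in> monoid_gen S"

definition puiseux_monoid :: "rat set \<Rightarrow> bool" where
  "puiseux_monoid M \<longleftrightarrow> M \<subseteq> {0..} \<and> 0 \<in> M \<and> (\<forall>x\<in>M. \<forall>y\<in>M. x + y \<in> M)"

definition weak_reciprocal_pm :: "rat set \<Rightarrow> bool" where
  "weak_reciprocal_pm M \<longleftrightarrow>
     (\<exists>d :: nat \<Rightarrow> nat. strict_mono d \<and> (\<forall>n. 0 < d n) \<and>
        M = monoid_gen (range (\<lambda>n. 1 / of_nat (d n))))"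

definition is_atom :: "rat set \<Rightarrow> rat \<Rightarrow> bool" where
  "is_atom M a \<longleftrightarrow> a \<in> M \<and> a \<noteq> 0 \<and>
     (\<forall>x\<in>M. \<forall>y\<in>M. a = x + y \<longrightarrow> x = 0 \<or> y = 0)"

definition atomic_pm :: "rat set \<Rightarrow> bool" where
  "atomic_pm M \<longleftrightarrow> (\<forall>x\<in>M. x \<in> monoid_gen {a. is_atom M a})"

definition principal_ideal :: "rat set \<Rightarrow> rat \<Rightarrow> rat set" where
  "principal_ideal M r = {r + q | q. q \<in> M}"

definition ACCP :: "rat set \<Rightarrow> bool" where
  "ACCP M \<longleftrightarrow> (\<forall>f :: nat \<Rightarrow> rat.
     (\<forall>n. f n \<in> M) \<and> (\<forall>n. principal_ideal M (f n) \<subseteq> principal_ideal M (f (Suc n))) \<longrightarrow>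
     (\<exists>N. \<forall>n\<ge>N. principal_ideal M (f n) = principal_ideal M (f N)))"

end

theory Submission
  imports Defs
begin

text \<open>Every generator \<open>g i = 1 / (p i * p (i + l))\<close> is an atom: an element of the monoid
  below \<open>g i\<close> is a sum of generators \<open>g j\<close> with \<open>j > i\<close>, whose denominators are coprime
  to the prime \<open>p i\<close>, so such a sum never equals \<open>g i\<close>. ACCP fails along the principal ideals
  generated by \<open>1 / p (k * l)\<close>: these numbers lie in the monoid and strictly decrease, and
  consecutive ones differ by \<open>(p (i + l) - p i) * g i\<close> with \<open>i = k * l\<close>, so each ideal
  contains the previous one.\<close>

lemma monoid_gen_add:
  "x \<in> monoid_gen S \<Longrightarrow> y \<in> monoid_gen S \<Longrightarrow> x + y \<in> monoid_gen S"
  by (induction x rule: monoid_gen.induct) (auto simp: add.assoc intro: monoid_gen.intros)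

lemma monoid_gen_nonneg: "x \<in> monoid_gen S \<Longrightarrow> S \<subseteq> {0..} \<Longrightarrow> x \<ge> 0"
  by (induction x rule: monoid_gen.induct) auto

lemma monoid_gen_mono: "x \<in> monoid_gen S \<Longrightarrow> S \<subseteq> T \<Longrightarrow> x \<in> monoid_gen T"
  by (induction x rule: monoid_gen.induct) (auto intro: monoid_gen.intros)

lemma of_nat_mult_in_monoid_gen: "s \<in> S \<Longrightarrow> of_nat c * s \<in> monoid_gen S"
proof (induction c)
  case 0
  then show ?case by (simp add: monoid_gen.zero)
next
  case (Suc c)
  then have "s + of_nat c * s \<in> monoid_gen S" by (intro monoid_gen.add)
  then show ?case by (simp add: algebra_simps)
qed

lemma generator_in_monoid_gen: "s \<in> S \<Longrightarrow> s \<in> monoid_gen S"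
  using of_nat_mult_in_monoid_gen[of s S 1] by simp

lemma monoid_gen_generators_le:
  assumes "x \<in> monoid_gen S" and "S \<subseteq> {0..}"
  shows "x \<in> monoid_gen {s \<in> S. s \<le> x}"
  using assms
proof (induction x rule: monoid_gen.induct)
  case zero
  show ?case by (rule monoid_gen.zero)
next
  case (add s x)
  have "x \<ge> 0" "s \<ge> 0" using add monoid_gen_nonneg by auto
  then have "x \<in> monoid_gen {t \<in> S. t \<le> s + x}"
    using add.IH[OF add.prems] by (rule_tac monoid_gen_mono) auto
  moreover have "s \<in> {t \<in> S. t \<le> s + x}" using add \<open>x \<ge> 0\<close> by auto
  ultimately show ?case by (blast intro: monoid_gen.add)
qed

lemma puiseux_monoid_monoid_gen: "S \<subseteq> {0..} \<Longrightarrow> puiseux_monoid (monoid_gen S)"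
  unfolding puiseux_monoid_def using monoid_gen_nonneg monoid_gen_add monoid_gen.zero by blast

lemma is_atom_monoid_gen:
  assumes pos: "S \<subseteq> {0<..}" and "a \<in> S" and not_smaller: "a \<notin> monoid_gen {s \<in> S. s < a}"
  shows "is_atom (monoid_gen S) a"
  unfolding is_atom_def
proof (intro conjI ballI impI)
  show "a \<in> monoid_gen S" using \<open>a \<in> S\<close> by (rule generator_in_monoid_gen)
  show "a \<noteq> 0" using pos \<open>a \<in> S\<close> by auto
next
  fix x y assume x: "x \<in> monoid_gen S" and y: "y \<in> monoid_gen S" and "a = x + y"
  have nonneg: "S \<subseteq> {0..}" using pos by auto
  have smaller: "z \<in> monoid_gen {s \<in> S. s < a}" if "z \<in> monoid_gen S" "z < a" for z
    using monoid_gen_generators_le[OF that(1) nonneg] by (rule monoid_gen_mono) (use that in auto)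
  show "x = 0 \<or> y = 0"
  proof (rule ccontr)
    assume "\<not> (x = 0 \<or> y = 0)"
    with x y nonneg have "x > 0" "y > 0" by (auto dest: monoid_gen_nonneg simp: order_le_less)
    then have "x + y \<in> monoid_gen {s \<in> S. s < a}"
      using smaller[OF x] smaller[OF y] \<open>a = x + y\<close> monoid_gen_add by simp
    with not_smaller \<open>a = x + y\<close> show False by simp
  qed
qed

lemma atomic_pm_monoid_gen:
  "(\<And>s. s \<in> S \<Longrightarrow> is_atom (monoid_gen S) s) \<Longrightarrow> atomic_pm (monoid_gen S)"
  unfolding atomic_pm_def by (auto elim: monoid_gen_mono)

lemma principal_ideal_subset:
  assumes "puiseux_monoid M" and "r - s \<in> M"
  shows "principal_ideal M r \<subseteq> principal_ideal M s"
proof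
  fix z assume "z \<in> principal_ideal M r"
  then obtain q where "q \<in> M" "z = s + ((r - s) + q)"
    unfolding principal_ideal_def by auto
  moreover have "(r - s) + q \<in> M"
    using assms \<open>q \<in> M\<close> unfolding puiseux_monoid_def by blast
  ultimately show "z \<in> principal_ideal M s" unfolding principal_ideal_def by blast
qed

lemma not_ACCP_if_decreasing_divisor_chain:
  assumes M: "puiseux_monoid M" and in_M: "\<And>n. f n \<in> M"
    and decreasing: "\<And>n. f (Suc n) < f n" and divides: "\<And>n. f n - f (Suc n) \<in> M"
  shows "\<not> ACCP M"
proof
  assume "ACCP M"
  moreover have "principal_ideal M (f n) \<subseteq> principal_ideal M (f (Suc n))" for n
    using principal_ideal_subset[OF M divides] .
  ultimately obtain N where "\<forall>n\<ge>N. principal_ideal M (f n) = principal_ideal M (f N)"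
    using in_M unfolding ACCP_def by blast
  then have "principal_ideal M (f (Suc N)) = principal_ideal M (f N)"
    by (rule allE[of _ "Suc N"]) simp
  moreover have "f (Suc N) \<in> principal_ideal M (f (Suc N))"
    using M unfolding principal_ideal_def puiseux_monoid_def by force
  ultimately obtain q where "q \<in> M" "f (Suc N) = f N + q"
    unfolding principal_ideal_def by blast
  with M decreasing[of N] show False unfolding puiseux_monoid_def by force
qed

definition denom_coprime :: "nat \<Rightarrow> rat \<Rightarrow> bool" where
  "denom_coprime q x \<longleftrightarrow> (\<exists>n :: int. \<exists>D :: nat. D > 0 \<and> coprime D q \<and> x = of_int n / of_nat D)"

lemma denom_coprime_add:
  assumes "denom_coprime q x" and "denom_coprime q y"
  shows "denom_coprime q (x + y)"
proof -
  obtain m D where D: "D > 0" "coprime D q" "x = of_int m / of_nat D"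
    using assms(1) unfolding denom_coprime_def by blast
  obtain n E where E: "E > 0" "coprime E q" "y = of_int n / of_nat E"
    using assms(2) unfolding denom_coprime_def by blast
  have "x + y = of_int (m * int E + n * int D) / of_nat (D * E)"
    using D E by (simp add: field_simps)
  moreover have "D * E > 0" "coprime (D * E) q" using D E by auto
  ultimately show ?thesis unfolding denom_coprime_def by blast
qed

lemma denom_coprime_monoid_gen:
  "x \<in> monoid_gen S \<Longrightarrow> (\<And>s. s \<in> S \<Longrightarrow> denom_coprime q s) \<Longrightarrow> denom_coprime q x"
proof (induction x rule: monoid_gen.induct)
  case zero
  show ?case unfolding denom_coprime_def by (intro exI[of _ 0] exI[of _ 1]) auto
next
  case (add s x)
  then show ?case by (simp add: denom_coprime_add)
qed

lemma denom_coprime_inverse_iff: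
  assumes "D > 0"
  shows "denom_coprime q (1 / of_nat D) \<longleftrightarrow> coprime D q"
proof
  assume "denom_coprime q (1 / of_nat D)"
  then obtain n E where E: "E > 0" "coprime E q" "1 / of_nat D = (of_int n / of_nat E :: rat)"
    unfolding denom_coprime_def by blast
  then have "(of_nat E :: rat) = of_int n * of_nat D"
    using assms by (simp add: field_simps)
  then have "int E = n * int D"
    by (metis of_int_eq_iff of_int_mult of_int_of_nat_eq)
  then have "int D dvd int E" by simp
  then obtain k where "E = D * k" by (auto elim: dvdE)
  with E(2) show "coprime D q" by simp
next
  assume "coprime D q"
  then show "denom_coprime q (1 / of_nat D)"
    unfolding denom_coprime_def using assms by (intro exI[of _ 1] exI[of _ D]) simp
qed

locale prime_pair_products =
  fixes p :: "nat \<Rightarrow> nat" and l :: nat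
  assumes strict_mono_p: "strict_mono p" and prime_p: "prime (p n)"
begin

definition gen :: "nat \<Rightarrow> rat" where
  "gen i = 1 / of_nat (p i * p (i + l))"

abbreviation M :: "rat set" where
  "M \<equiv> monoid_gen (range gen)"

lemma p_gt_1: "p n > 1"
  using prime_p prime_gt_1_nat by blast

lemma strict_mono_denominators: "strict_mono (\<lambda>i. p i * p (i + l))"
proof (rule strict_monoI)
  fix m n :: nat assume "m < n"
  then have "p m < p n" "p (m + l) < p (n + l)"
    using strict_mono_p by (auto simp: strict_mono_less)
  then show "p m * p (m + l) < p n * p (n + l)"
    by (intro mult_strict_mono) auto
qed

lemma gen_pos: "gen i > 0"
  unfolding gen_def using p_gt_1[of i] p_gt_1[of "i + l"] by simp

lemma puiseux_monoid_M: "puiseux_monoid M"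
  using gen_pos by (intro puiseux_monoid_monoid_gen) (auto intro: less_imp_le)

lemma gen_antimono:
  assumes "i \<le> j"
  shows "gen j \<le> gen i"
proof -
  have "p i * p (i + l) \<le> p j * p (j + l)"
    using strict_mono_less_eq[OF strict_mono_denominators] assms by simp
  moreover have "p i * p (i + l) > 0"
    using p_gt_1[of i] p_gt_1[of "i + l"] by simp
  ultimately show ?thesis
    unfolding gen_def by (intro frac_le) (simp_all del: of_nat_mult)
qed

lemma gen_less_imp_index_greater: "gen j < gen i \<Longrightarrow> i < j"
  using gen_antimono[of j i] by (meson leD le_less_linear)

lemma is_atom_gen: "is_atom M (gen i)"
proof (rule is_atom_monoid_gen)
  show "range gen \<subseteq> {0<..}" using gen_pos by auto
  have "denom_coprime (p i) s" if s: "s \<in> range gen" "s < gen i" for s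
  proof -
    obtain j where j: "s = gen j" "i < j"
      using s gen_less_imp_index_greater by blast
    then have "p i < p j" "p i < p (j + l)"
      using strict_mono_p by (auto simp: strict_mono_less)
    then have "coprime (p j * p (j + l)) (p i)"
      using prime_p by (auto intro: primes_coprime)
    then show ?thesis
      unfolding j gen_def using p_gt_1[of j] p_gt_1[of "j + l"]
      by (subst denom_coprime_inverse_iff) auto
  qed
  moreover have "\<not> denom_coprime (p i) (gen i)"
    unfolding gen_def using p_gt_1[of i] p_gt_1[of "i + l"]
    by (subst denom_coprime_inverse_iff) auto
  ultimately show "gen i \<notin> monoid_gen {s \<in> range gen. s < gen i}"
    using denom_coprime_monoid_gen by blast
qed simp

lemma inverse_p_in_M: "1 / of_nat (p i) \<in> M"
proof -
  have "of_nat (p (i + l)) * gen i \<in> M"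
    by (rule of_nat_mult_in_monoid_gen) simp
  then show ?thesis
    unfolding gen_def using p_gt_1[of "i + l"] by simp
qed

lemma inverse_p_diff_in_M:
  "1 / of_nat (p i) - 1 / of_nat (p (i + l)) \<in> M"
proof -
  have le: "p i \<le> p (i + l)"
    using strict_mono_p by (simp add: strict_mono_less_eq)
  have "of_nat (p (i + l) - p i) * gen i \<in> M"
    by (rule of_nat_mult_in_monoid_gen) simp
  also have "of_nat (p (i + l) - p i) * gen i = 1 / of_nat (p i) - 1 / of_nat (p (i + l))"
    unfolding gen_def using le p_gt_1[of i] p_gt_1[of "i + l"]
    by (simp add: of_nat_diff field_simps)
  finally show ?thesis .
qed

lemma not_ACCP_M:
  assumes "l \<ge> 1"
  shows "\<not> ACCP M"
proof (rule not_ACCP_if_decreasing_divisor_chain)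
  define f :: "nat \<Rightarrow> rat" where "f k = 1 / of_nat (p (k * l))" for k
  show "puiseux_monoid M" by (rule puiseux_monoid_M)
  show "f k \<in> M" for k
    unfolding f_def by (rule inverse_p_in_M)
  show "f k - f (Suc k) \<in> M" for k
    using inverse_p_diff_in_M[of "k * l"] unfolding f_def by (simp add: add.commute)
  show "f (Suc k) < f k" for k
  proof -
    have "p (k * l) < p (k * l + l)"
      using strict_mono_p assms by (simp add: strict_mono_less)
    then show ?thesis
      unfolding f_def using p_gt_1[of "k * l"] by (simp add: add.commute frac_less2)
  qed
qed

end

theorem proposition4p7:
  fixes p :: "nat \<Rightarrow> nat" and l :: nat
  assumes "strict_mono p" and "\<forall>n. prime (p n)" and "l \<ge> 1"
  shows "puiseux_monoid (monoid_gen (range (\<lambda>i. 1 / of_nat (p i * p (i + l)))))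
       \<and> weak_reciprocal_pm (monoid_gen (range (\<lambda>i. 1 / of_nat (p i * p (i + l)))))
       \<and> atomic_pm (monoid_gen (range (\<lambda>i. 1 / of_nat (p i * p (i + l)))))
       \<and> \<not> ACCP (monoid_gen (range (\<lambda>i. 1 / of_nat (p i * p (i + l)))))"
proof -
  interpret prime_pair_products p l
    using assms(1,2) by unfold_locales auto
  have "puiseux_monoid M" by (rule puiseux_monoid_M)
  moreover have "weak_reciprocal_pm M"
    unfolding weak_reciprocal_pm_def gen_def
    using strict_mono_denominators prime_p prime_gt_0_nat
    by (intro exI[of _ "\<lambda>i. p i * p (i + l)"]) simp
  moreover have "atomic_pm M"
    using is_atom_gen by (intro atomic_pm_monoid_gen) auto
  moreover have "\<not> ACCP M"
    using not_ACCP_M assms(3) .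
  ultimately show ?thesis
    unfolding gen_def by simp
qed

end
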